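(* With the Fock space $\widetilde{\mathcal H}$, operators $M_k,A_k,D_k$ and vectors $\eta_k$ as in the context, let $R$ be a positive integer and $\varepsilon\colon\{1,\dots,R\}\to\{1,*\}$, $\iota\colon\{1,\dots,R\}\to\{1,\dots,N\}$. Suppose $\psi\colon\{1,\dots,R\}\to\mathcal L(\widetilde{\mathcal H})$ satisfies: (a) $\psi(1)\in\{M_{\iota(1)},A^*_{\iota(1)}\}$ if $\varepsilon(1)=1$, and $\psi(1)\in\{M^*_{\iota(1)},D^*_{\iota(1)}\}$ if $\varepsilon(1)=*$; (b) $\psi(R)\in\{M_{\iota(R)},D_{\iota(R)}\}$ if $\varepsilon(R)=1$, and $\psi(R)\in\{M^*_{\iota(R)},A_{\iota(R)}\}$ if $\varepsilon(R)=*$; (c) for $2\le j\le R-1$, $\psi(j)\in\{M_{\iota(j)}^{\varepsilon(j)},(A^*_{\iota(j)})^{\varepsilon(j)},D_{\iota(j)}^{\varepsilon(j)}\}$. Let $k,k'\in\{1,\dots,N\}$. Then $\langle\psi(1)\psi(2)\cdots\psi(R)\eta_k,\eta_{k'}\rangle=0$ unless $k=k'=\iota(1)=\iota(R)$ and there exists $\pi\in NC(R)$ such that (i) $\pi\in NC_{\mathrm{irr}}(R)$, (ii) for every block $(q_1<\dots<q_r)$ of $\pi$, $\iota(q_1)=\dots=\iota(q_r)$ and $\varepsilon(q_1)\ne\varepsilon(q_2)\ne\dots\ne\varepsilon(q_r)\ne\varepsilon(q_1)$, and $\psi=\varphi_\pi$, where $\varphi_\pi$ is defined by: $\varphi_\pi(j)=M_{\iota(j)}^{\varepsilon(j)}$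 for $j\in\{1,R\}$; for $2\le j\le R-1$ with $\varepsilon(j)=1$, $\varphi_\pi(j)$ is $D_{\iota(j)}$, $A^*_{\iota(j)}$ or $M_{\iota(j)}$ according as $j$ is the least element of its block, the greatest element of its block, or neither; for $2\le j\le R-1$ with $\varepsilon(j)=*$, $\varphi_\pi(j)$ is $A_{\iota(j)}$, $D^*_{\iota(j)}$ or $M^*_{\iota(j)}$ in the same three cases.
   Context: $\sigma_1,\dots,\sigma_N$ are compactly supported symmetric finite positive Borel measures on $\mathbf{R}$. $NC(R)$ is the set of noncrossing partitions of $\{1,\dots,R\}$ and $NC_{\mathrm{irr}}(R)$ those in which $1$ and $R$ lie in the same block. Fock model: let $\{e,f\}$ be an orthonormal basis of $\mathbf{C}^2$, $H_k^e=L^2(\sigma_k)\otimes\mathbf{C}e$, $H_k^f=L^2(\sigma_k)\otimes\mathbf{C}f$, $\mathcal H=\bigoplus_{k=1}^N(H_k^e\oplus H_k^f)$, $\widetilde{\mathcal H}=\bigoplus_{n\ge1}\mathcal H^{\otimes n}$ (no vacuum), with inner product $\langle\cdot,\cdot\rangle$. Let $\mathrm{id}_k\in L^2(\sigma_k)$ be $t\mapsto t$ and $1_k$ the constant $1$; $m_k\colon H_k^e\to H_k^f$, $m_k(F\otimes e)=(\mathrm{id}_k F)\otimes f$. For $v_1,\dots,v_n\in\mathcal H$: $M_k(v_1\otimes\cdots\otimes v_n)=m_k(P_{H_k^e}v_1)\otimes v_2\otimes\cdots\otimes v_n$ (so $M_k^*(v_1\otimes\cdots\otimes v_n)=m_k^*(P_{H_k^f}v_1)\otimes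 v_2\otimes\cdots\otimes v_n$), $A_k^*(v_1\otimes\cdots\otimes v_n)=(\mathrm{id}_k\otimes f)\otimes v_1\otimes\cdots\otimes v_n$, $D_k^*(v_1\otimes\cdots\otimes v_n)=(\mathrm{id}_k\otimes e)\otimes v_1\otimes\cdots\otimes v_n$; adjoints $A_k(v_1\otimes\cdots\otimes v_n)=\langle v_1,\mathrm{id}_k\otimes f\rangle v_2\otimes\cdots\otimes v_n$, $D_k(v_1\otimes\cdots\otimes v_n)=\langle v_1,\mathrm{id}_k\otimes e\rangle v_2\otimes\cdots\otimes v_n$ for $n\ge2$, and $A_kv=D_kv=0$ for $v\in\mathcal H$. $P_H$ is orthogonal projection onto $H$. For an operator $Z$, $Z^1=Z$ and $Z^*$ is its adjoint (so $(A_k^* )^*=A_k$). $\eta_k=1_k\otimes e+1_k\otimes f$. *)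

theory Defs
  imports "HOL-Analysis.Analysis" "HOL-Library.Disjoint_Sets"
begin

text \<open>A vector is represented by its
  "kernel": a function of a tensor word ((k_1,b_1,t_1),...,(k_n,b_n,t_n)), where
  k_i is the component index, b_i = True means the basis vector e and b_i = False
  means f, and t_i is the variable of L2(sigma_{k_i}).  The degree-n component
  is the restriction to words of length n; the value at the empty word (vacuum)
  plays no role.\<close>

type_synonym fvec = "(nat \<times> bool \<times> real) list \<Rightarrow> complex"

definition deg_inner :: "(nat \<Rightarrow> real measure) \<Rightarrow> nat \<Rightarrow> nat \<Rightarrow> fvec \<Rightarrow> fvec \<Rightarrow> complex" where
  "deg_inner \<sigma> N n v w =
     (\<Sum>ks\<in>{ks. length ks = n \<and> set ks \<subseteq> {1..N}}.
      \<Sum>bs\<in>{bs::bool list. length bs = n}.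
        LINT x | PiM {..<n} (\<lambda>i. \<sigma> (ks ! i)).
          v (map (\<lambda>i. (ks ! i, bs ! i, x i)) [0..<n]) *
          cnj (w (map (\<lambda>i. (ks ! i, bs ! i, x i)) [0..<n])))"

definition fock_inner :: "(nat \<Rightarrow> real measure) \<Rightarrow> nat \<Rightarrow> fvec \<Rightarrow> fvec \<Rightarrow> complex" where
  "fock_inner \<sigma> N v w = (\<Sum>n. deg_inner \<sigma> N (Suc n) v w)"

definition opM :: "nat \<Rightarrow> fvec \<Rightarrow> fvec" where
  "opM k v = (\<lambda>xs. case xs of [] \<Rightarrow> 0
     | (k', b, t) # rest \<Rightarrow> if k' = k \<and> \<not> b then complex_of_real t * v ((k, True, t) # rest) else 0)"

definition opMstar :: "nat \<Rightarrow> fvec \<Rightarrow> fvec" where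
  "opMstar k v = (\<lambda>xs. case xs of [] \<Rightarrow> 0
     | (k', b, t) # rest \<Rightarrow> if k' = k \<and> b then complex_of_real t * v ((k, False, t) # rest) else 0)"

definition opAstar :: "nat \<Rightarrow> fvec \<Rightarrow> fvec" where
  "opAstar k v = (\<lambda>xs. case xs of [] \<Rightarrow> 0
     | (k', b, t) # rest \<Rightarrow> if k' = k \<and> \<not> b \<and> rest \<noteq> [] then complex_of_real t * v rest else 0)"

definition opDstar :: "nat \<Rightarrow> fvec \<Rightarrow> fvec" where
  "opDstar k v = (\<lambda>xs. case xs of [] \<Rightarrow> 0
     | (k', b, t) # rest \<Rightarrow> if k' = k \<and> b \<and> rest \<noteq> [] then complex_of_real t * v rest else 0)"

definition opA :: "(nat \<Rightarrow> real measure) \<Rightarrow> nat \<Rightarrow> fvec \<Rightarrow> fvec" where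
  "opA \<sigma> k v = (\<lambda>xs. if xs = [] then 0
     else LINT s | \<sigma> k. v ((k, False, s) # xs) * complex_of_real s)"

definition opD :: "(nat \<Rightarrow> real measure) \<Rightarrow> nat \<Rightarrow> fvec \<Rightarrow> fvec" where
  "opD \<sigma> k v = (\<lambda>xs. if xs = [] then 0
     else LINT s | \<sigma> k. v ((k, True, s) # xs) * complex_of_real s)"

text \<open>Powers Z^eps, where eps = True stands for the exponent 1 and eps = False for *.\<close>

definition Mpow :: "nat \<Rightarrow> bool \<Rightarrow> fvec \<Rightarrow> fvec" where
  "Mpow k e = (if e then opM k else opMstar k)"

definition Astarpow :: "(nat \<Rightarrow> real measure) \<Rightarrow> nat \<Rightarrow> bool \<Rightarrow> fvec \<Rightarrow> fvec" where
  "Astarpow \<sigma> k e = (if e then opAstar k else opA \<sigma> k)"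

definition Dpow :: "(nat \<Rightarrow> real measure) \<Rightarrow> nat \<Rightarrow> bool \<Rightarrow> fvec \<Rightarrow> fvec" where
  "Dpow \<sigma> k e = (if e then opD \<sigma> k else opDstar k)"

text \<open>eta_k = 1_k (x) e + 1_k (x) f.\<close>

definition eta :: "nat \<Rightarrow> fvec" where
  "eta k = (\<lambda>xs. case xs of [(k', b, t)] \<Rightarrow> if k' = k then 1 else 0 | _ \<Rightarrow> 0)"

definition NC :: "nat \<Rightarrow> nat set set \<Rightarrow> bool" where
  "NC R \<pi> \<longleftrightarrow> partition_on {1..R} \<pi> \<and>
     (\<forall>B1\<in>\<pi>. \<forall>B2\<in>\<pi>. B1 \<noteq> B2 \<longrightarrow>
        \<not> (\<exists>a b c d. a < b \<and> b < c \<and> c < d \<and> a \<in> B1 \<and> c \<in> B1 \<and> b \<in> B2 \<and> d \<in> B2))"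

definition NC_irr :: "nat \<Rightarrow> nat set set \<Rightarrow> bool" where
  "NC_irr R \<pi> \<longleftrightarrow> NC R \<pi> \<and> (\<exists>B\<in>\<pi>. 1 \<in> B \<and> R \<in> B)"

definition block_of :: "nat set set \<Rightarrow> nat \<Rightarrow> nat set" where
  "block_of \<pi> j = (THE B. B \<in> \<pi> \<and> j \<in> B)"

definition block_ok :: "(nat \<Rightarrow> nat) \<Rightarrow> (nat \<Rightarrow> bool) \<Rightarrow> nat set \<Rightarrow> bool" where
  "block_ok \<iota> \<epsilon> B \<longleftrightarrow>
     (let qs = sorted_list_of_set B in
       (\<forall>i < length qs. \<iota> (qs ! i) = \<iota> (hd qs)) \<and>
       (\<forall>i. Suc i < length qs \<longrightarrow> \<epsilon> (qs ! i) \<noteq> \<epsilon> (qs ! Suc i)) \<and>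
       \<epsilon> (last qs) \<noteq> \<epsilon> (hd qs))"

definition phi :: "(nat \<Rightarrow> real measure) \<Rightarrow> nat \<Rightarrow> (nat \<Rightarrow> nat) \<Rightarrow> (nat \<Rightarrow> bool) \<Rightarrow> nat set set
     \<Rightarrow> nat \<Rightarrow> fvec \<Rightarrow> fvec" where
  "phi \<sigma> R \<iota> \<epsilon> \<pi> j =
     (if j = 1 \<or> j = R then Mpow (\<iota> j) (\<epsilon> j)
      else if j = Min (block_of \<pi> j) then (if \<epsilon> j then opD \<sigma> (\<iota> j) else opA \<sigma> (\<iota> j))
      else if j = Max (block_of \<pi> j) then (if \<epsilon> j then opAstar (\<iota> j) else opDstar (\<iota> j))
      else Mpow (\<iota> j) (\<epsilon> j))"

definition apply_word :: "(nat \<Rightarrow> fvec \<Rightarrow> fvec) \<Rightarrow> nat \<Rightarrow> fvec \<Rightarrow> fvec" where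
  "apply_word \<psi> R v = foldr (\<lambda>j w. \<psi> j w) [1..<Suc R] v"

end

theory Submission
  imports Defs
begin

text \<open>Evaluate the kernel of \<open>\<psi>(1) \<cdots> \<psi>(R) \<eta>\<^sub>k\<close> at a tensor word from the outside in.
  \<open>M\<^sup>\<epsilon>\<close> multiplies by the variable of the first factor and flips its \<open>e\<close>/\<open>f\<close> label,
  the creators \<open>A\<^sup>*\<close>, \<open>D\<^sup>*\<close> multiply by it and remove the factor, and the annihilators
  \<open>A\<close>, \<open>D\<close> prepend a new factor whose variable is integrated against \<open>\<sigma>\<close>.  Recording
  which position created each factor turns the evaluation into a stack machine: the
  kernel is a product of moments of the \<open>\<sigma>\<^sub>q\<close> times a monomial in the remaining
  variables, and it vanishes unless every step matches the component and label of the
  top factor.  Odd moments of symmetric measures vanish, so a nonzero inner product with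
  \<open>\<eta>\<^bsub>k'\<^esub>\<close> forces an accepting run in which every factor is touched an even number of
  times.  The positions acting on a common factor form the blocks of \<open>\<pi>\<close>: the stack
  discipline makes \<open>\<pi>\<close> noncrossing, the label checks give (ii) for consecutive
  elements of a block, evenness closes the alternation, and the factor of \<open>\<eta>\<^sub>k\<close>,
  present from position \<open>1\<close> to \<open>R\<close>, makes \<open>\<pi>\<close> irreducible.\<close>

datatype op_kind = OpM | OpMstar | OpAstar | OpDstar | OpA | OpD

fun op_of_kind :: "(nat \<Rightarrow> real measure) \<Rightarrow> op_kind \<Rightarrow> nat \<Rightarrow> fvec \<Rightarrow> fvec" where
  "op_of_kind \<sigma> OpM q = opM q"
| "op_of_kind \<sigma> OpMstar q = opMstar q"
| "op_of_kind \<sigma> OpAstar q = opAstar q"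
| "op_of_kind \<sigma> OpDstar q = opDstar q"
| "op_of_kind \<sigma> OpA q = opA \<sigma> q"
| "op_of_kind \<sigma> OpD q = opD \<sigma> q"

text \<open>The annihilators open a block and the creators close one, because the word
  is read from the outside in.  The exponent is that of the operator as a power
  \<open>Z\<^sup>\<epsilon>\<close>, with \<open>True\<close> for \<open>1\<close>.\<close>

fun opens_block :: "op_kind \<Rightarrow> bool" where
  "opens_block OpA = True" | "opens_block OpD = True" | "opens_block _ = False"

fun closes_block :: "op_kind \<Rightarrow> bool" where
  "closes_block OpAstar = True" | "closes_block OpDstar = True" | "closes_block _ = False"

fun kind_exp :: "op_kind \<Rightarrow> bool" where
  "kind_exp OpM = True" | "kind_exp OpMstar = False"
| "kind_exp OpAstar = True" | "kind_exp OpDstar = False"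
| "kind_exp OpA = False" | "kind_exp OpD = True"

lemma op_of_kind_opening:
  assumes "opens_block \<kappa>"
  shows "op_of_kind \<sigma> \<kappa> q v xs =
    (if xs = [] then 0 else LINT s | \<sigma> q. v ((q, kind_exp \<kappa>, s) # xs) * complex_of_real s)"
  using assms by (cases \<kappa>) (simp_all add: opA_def opD_def)

lemma op_of_kind_Nil: "\<not> opens_block \<kappa> \<Longrightarrow> op_of_kind \<sigma> \<kappa> q v [] = 0"
  by (cases \<kappa>) (simp_all add: opM_def opMstar_def opAstar_def opDstar_def)

lemma op_of_kind_Cons:
  assumes "\<not> opens_block \<kappa>"
  shows "op_of_kind \<sigma> \<kappa> q v ((q', b, t) # xs) =
    (if q' = q \<and> b = (\<not> kind_exp \<kappa>) then
       complex_of_real t * (if \<not> closes_block \<kappa> then v ((q, kind_exp \<kappa>, t) # xs)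
                            else if xs = [] then 0 else v xs)
     else 0)"
  using assms by (cases \<kappa>) (auto simp: opM_def opMstar_def opAstar_def opDstar_def)

lemma admissible_word_op_kinds:
  fixes R :: nat and \<psi> :: "nat \<Rightarrow> fvec \<Rightarrow> fvec"
  assumes R: "1 \<le> R"
    and a: "\<psi> 1 \<in> (if \<epsilon> 1 then {opM (\<iota> 1), opAstar (\<iota> 1)} else {opMstar (\<iota> 1), opDstar (\<iota> 1)})"
    and b: "\<psi> R \<in> (if \<epsilon> R then {opM (\<iota> R), opD \<sigma> (\<iota> R)} else {opMstar (\<iota> R), opA \<sigma> (\<iota> R)})"
    and c: "\<And>j. 2 \<le> j \<Longrightarrow> j \<le> R - 1 \<Longrightarrow>
      \<psi> j \<in> {Mpow (\<iota> j) (\<epsilon> j), Astarpow \<sigma> (\<iota> j) (\<epsilon> j), Dpow \<sigma> (\<iota> j) (\<epsilon> j)}"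
  obtains \<kappa> where
      "\<And>j. 1 \<le> j \<Longrightarrow> j \<le> R \<Longrightarrow> \<psi> j = op_of_kind \<sigma> (\<kappa> j) (\<iota> j) \<and> kind_exp (\<kappa> j) = \<epsilon> j"
    and "\<not> opens_block (\<kappa> 1)" and "R = 1 \<or> \<not> closes_block (\<kappa> R)"
proof -
  have "\<exists>\<kappa>. \<psi> j = op_of_kind \<sigma> \<kappa> (\<iota> j) \<and> kind_exp \<kappa> = \<epsilon> j \<and>
      (j = 1 \<longrightarrow> \<not> opens_block \<kappa>) \<and> (j = R \<and> j \<noteq> 1 \<longrightarrow> \<not> closes_block \<kappa>)"
    if j: "1 \<le> j" "j \<le> R" for j
  proof -
    consider "j = 1" | "j \<noteq> 1" "j = R" | "2 \<le> j" "j \<le> R - 1"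
      using j by fastforce
    then show ?thesis
    proof cases
      case 1
      then show ?thesis
        using a by (cases "\<epsilon> 1")
          (auto intro: exI[of _ OpM] exI[of _ OpAstar] exI[of _ OpMstar] exI[of _ OpDstar])
    next
      case 2
      then show ?thesis
        using b by (cases "\<epsilon> R")
          (auto intro: exI[of _ OpM] exI[of _ OpD] exI[of _ OpMstar] exI[of _ OpA])
    next
      case 3
      then show ?thesis
        using c[OF 3] by (cases "\<epsilon> j")
          (auto simp: Mpow_def Astarpow_def Dpow_def
            intro: exI[of _ OpM] exI[of _ OpAstar] exI[of _ OpD]
            exI[of _ OpMstar] exI[of _ OpA] exI[of _ OpDstar])
    qed
  qed
  then obtain \<kappa> where "\<And>j. 1 \<le> j \<Longrightarrow> j \<le> R \<Longrightarrow>
      \<psi> j = op_of_kind \<sigma> (\<kappa> j) (\<iota> j) \<and> kind_exp (\<kappa> j) = \<epsilon> j \<and>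
      (j = 1 \<longrightarrow> \<not> opens_block (\<kappa> j)) \<and> (j = R \<and> j \<noteq> 1 \<longrightarrow> \<not> closes_block (\<kappa> j))"
    by metis
  then show thesis
    using that[of \<kappa>] R by auto
qed

section \<open>The stack machine\<close>

text \<open>A stack entry \<open>(X, q, b)\<close> stands for a tensor factor \<open>L\<^sup>2(\<sigma>\<^sub>q) \<otimes> e\<close> (\<open>b\<close>) or
  \<open>\<otimes> f\<close> (\<open>\<not> b\<close>) together with the label \<open>X\<close> of the position that created it;
  the bottom entry, coming from \<open>\<eta>\<^sub>k\<close>, has label \<open>0\<close>.  A step fails exactly when
  the operator at that position kills the word.\<close>

type_synonym stack = "(nat \<times> nat \<times> bool) list"

definition step :: "(nat \<Rightarrow> op_kind) \<Rightarrow> (nat \<Rightarrow> nat) \<Rightarrow> nat \<Rightarrow> stack \<Rightarrow> stack option" where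
  "step \<kappa> \<iota> j S =
     (if opens_block (\<kappa> j) then (if S = [] then None else Some ((j, \<iota> j, kind_exp (\<kappa> j)) # S))
      else case S of
        [] \<Rightarrow> None
      | (X, q, b) # S' \<Rightarrow>
          if q = \<iota> j \<and> b = (\<not> kind_exp (\<kappa> j)) then
            (if closes_block (\<kappa> j) then (if S' = [] then None else Some S')
             else Some ((X, q, kind_exp (\<kappa> j)) # S'))
          else None)"

fun run :: "(nat \<Rightarrow> op_kind) \<Rightarrow> (nat \<Rightarrow> nat) \<Rightarrow> nat \<Rightarrow> nat \<Rightarrow> stack \<Rightarrow> stack option" where
  "run \<kappa> \<iota> j 0 S = Some S"
| "run \<kappa> \<iota> j (Suc n) S = (case step \<kappa> \<iota> j S of None \<Rightarrow> None | Some S' \<Rightarrow> run \<kappa> \<iota> (Suc j) n S')"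

lemma run_add:
  "run \<kappa> \<iota> j (m + n) S = (case run \<kappa> \<iota> j m S of None \<Rightarrow> None | Some S' \<Rightarrow> run \<kappa> \<iota> (j + m) n S')"
  by (induction m arbitrary: j S) (auto split: option.splits)

lemma run_Suc_last:
  "run \<kappa> \<iota> j (Suc n) S = (case run \<kappa> \<iota> j n S of None \<Rightarrow> None | Some S' \<Rightarrow> step \<kappa> \<iota> (j + n) S')"
  using run_add[of \<kappa> \<iota> j n 1 S] by (auto split: option.splits)

text \<open>How often the positions \<open>j, \<dots>, j + n - 1\<close> multiply by the variable of the
  entry at depth \<open>i\<close> of the stack met at position \<open>j\<close>.\<close>

fun touch_count :: "(nat \<Rightarrow> op_kind) \<Rightarrow> nat \<Rightarrow> nat \<Rightarrow> nat \<Rightarrow> nat" where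
  "touch_count \<kappa> j 0 i = 0"
| "touch_count \<kappa> j (Suc n) i =
     (if opens_block (\<kappa> j) then touch_count \<kappa> (Suc j) n (Suc i)
      else if closes_block (\<kappa> j) then (if i = 0 then 1 else touch_count \<kappa> (Suc j) n (i - 1))
      else (if i = 0 then 1 else 0) + touch_count \<kappa> (Suc j) n i)"

definition moment :: "(nat \<Rightarrow> real measure) \<Rightarrow> nat \<Rightarrow> nat \<Rightarrow> complex" where
  "moment \<sigma> q m = (LINT s | \<sigma> q. complex_of_real s ^ m)"

text \<open>An opening position integrates its new variable against all the touches it
  will receive, including its own.\<close>

fun run_weight :: "(nat \<Rightarrow> real measure) \<Rightarrow> (nat \<Rightarrow> op_kind) \<Rightarrow> (nat \<Rightarrow> nat) \<Rightarrow> nat \<Rightarrow>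
    nat \<Rightarrow> nat \<Rightarrow> stack \<Rightarrow> complex" where
  "run_weight \<sigma> \<kappa> \<iota> k j 0 S = (if length S = 1 \<and> fst (snd (hd S)) = k then 1 else 0)"
| "run_weight \<sigma> \<kappa> \<iota> k j (Suc n) S =
     (case step \<kappa> \<iota> j S of
        None \<Rightarrow> 0
      | Some S' \<Rightarrow> (if opens_block (\<kappa> j) then moment \<sigma> (\<iota> j) (Suc (touch_count \<kappa> (Suc j) n 0))
                   else 1) * run_weight \<sigma> \<kappa> \<iota> k (Suc j) n S')"

lemma run_weight_nonzero_imp_run:
  assumes "run_weight \<sigma> \<kappa> \<iota> k j n S \<noteq> 0"
  shows "\<exists>e. run \<kappa> \<iota> j n S = Some [e] \<and> fst (snd e) = k"
  using assms
proof (induction n arbitrary: j S)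
  case 0
  then show ?case
    by (cases S rule: remdups_adj.cases) (auto split: if_splits)
next
  case (Suc n)
  then show ?case
    by (auto split: option.splits)
qed

lemma run_weight_nonzero_imp_moment:
  assumes "run_weight \<sigma> \<kappa> \<iota> k j n S \<noteq> 0" and "j \<le> p" "p < j + n" "opens_block (\<kappa> p)"
  shows "moment \<sigma> (\<iota> p) (Suc (touch_count \<kappa> (Suc p) (j + n - Suc p) 0)) \<noteq> 0"
  using assms
proof (induction n arbitrary: j S)
  case 0
  then show ?case by simp
next
  case (Suc n)
  then obtain S' where "step \<kappa> \<iota> j S = Some S'"
    and nz: "(if opens_block (\<kappa> j) then moment \<sigma> (\<iota> j) (Suc (touch_count \<kappa> (Suc j) n 0)) else 1) *
          run_weight \<sigma> \<kappa> \<iota> k (Suc j) n S' \<noteq> 0"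
    by (auto split: option.splits)
  show ?case
  proof (cases "p = j")
    case True
    then show ?thesis using nz Suc.prems(4) by auto
  next
    case False
    then show ?thesis using Suc.IH[of "Suc j" S'] nz Suc.prems(2-4) by auto
  qed
qed

section \<open>Factorization of the kernel\<close>

definition stack_shape :: "stack \<Rightarrow> (nat \<times> bool) list" where
  "stack_shape S = map (\<lambda>(X, q, b). (q, b)) S"

definition word_shape :: "(nat \<times> bool \<times> real) list \<Rightarrow> (nat \<times> bool) list" where
  "word_shape xs = map (\<lambda>(q, b, t). (q, b)) xs"

lemma stack_shape_Nil_iff: "stack_shape S = word_shape [] \<longleftrightarrow> S = []"
  by (simp add: stack_shape_def word_shape_def)

lemma stack_shape_Cons_iff:
  "stack_shape S = word_shape ((q, b, t) # xs) \<longleftrightarrow>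
     (\<exists>X S'. S = (X, q, b) # S' \<and> stack_shape S' = word_shape xs)"
  by (cases S) (auto simp: stack_shape_def word_shape_def)

definition word_vec :: "(nat \<Rightarrow> fvec \<Rightarrow> fvec) \<Rightarrow> nat \<Rightarrow> nat \<Rightarrow> nat \<Rightarrow> fvec" where
  "word_vec \<psi> k j n = foldr \<psi> [j..<j + n] (eta k)"

lemma word_vec_Suc: "word_vec \<psi> k j (Suc n) = \<psi> j (word_vec \<psi> k (Suc j) n)"
  by (simp add: word_vec_def upt_rec)

lemma apply_word_eta: "apply_word \<psi> R (eta k) = word_vec \<psi> k 1 R"
  by (simp add: apply_word_def word_vec_def)

definition touch_monomial ::
    "(nat \<Rightarrow> op_kind) \<Rightarrow> nat \<Rightarrow> nat \<Rightarrow> (nat \<times> bool \<times> real) list \<Rightarrow> complex" where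
  "touch_monomial \<kappa> j n xs =
     (\<Prod>i<length xs. complex_of_real (snd (snd (xs ! i))) ^ touch_count \<kappa> j n i)"

lemma touch_monomial_Cons:
  "touch_monomial \<kappa> j n ((q, b, t) # xs) = complex_of_real t ^ touch_count \<kappa> j n 0 *
     (\<Prod>i<length xs. complex_of_real (snd (snd (xs ! i))) ^ touch_count \<kappa> j n (Suc i))"
  unfolding touch_monomial_def length_Cons prod.lessThan_Suc_shift by simp

lemma word_vec_factorization_step_opening:
  assumes \<psi>: "\<psi> j = op_of_kind \<sigma> (\<kappa> j) (\<iota> j)" and opens: "opens_block (\<kappa> j)"
    and IH: "\<And>S' ys. stack_shape S' = word_shape ys \<Longrightarrow>
      word_vec \<psi> k (Suc j) n ys = run_weight \<sigma> \<kappa> \<iota> k (Suc j) n S' * touch_monomial \<kappa> (Suc j) n ys"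
    and shape: "stack_shape S = word_shape xs"
  shows "word_vec \<psi> k j (Suc n) xs = run_weight \<sigma> \<kappa> \<iota> k j (Suc n) S * touch_monomial \<kappa> j (Suc n) xs"
proof (cases "xs = []")
  case True
  then show ?thesis
    using shape opens by (simp add: word_vec_Suc \<psi> op_of_kind_opening stack_shape_Nil_iff step_def)
next
  case False
  define T where "T = touch_count \<kappa> (Suc j) n 0"
  define C where "C = run_weight \<sigma> \<kappa> \<iota> k (Suc j) n ((j, \<iota> j, kind_exp (\<kappa> j)) # S) *
    touch_monomial \<kappa> j (Suc n) xs"
  have integrand: "word_vec \<psi> k (Suc j) n ((\<iota> j, kind_exp (\<kappa> j), s) # xs) * complex_of_real s =
      C * complex_of_real s ^ Suc T" for s
    using IH[of "(j, \<iota> j, kind_exp (\<kappa> j)) # S" "(\<iota> j, kind_exp (\<kappa> j), s) # xs"] shape opens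
    by (simp add: C_def T_def touch_monomial_Cons touch_monomial_def[of _ j]
        stack_shape_def word_shape_def algebra_simps)
  have "word_vec \<psi> k j (Suc n) xs = (LINT s | \<sigma> (\<iota> j). C * complex_of_real s ^ Suc T)"
    using False by (simp only: word_vec_Suc \<psi> op_of_kind_opening[OF opens] integrand if_False)
  also have "\<dots> = C * moment \<sigma> (\<iota> j) (Suc T)"
    by (simp add: moment_def del: power_Suc)
  moreover have "S \<noteq> []"
    using False shape by (auto simp: stack_shape_def word_shape_def)
  ultimately show ?thesis
    using opens by (simp add: C_def T_def step_def)
qed

lemma word_vec_factorization_step_non_opening:
  assumes \<psi>: "\<psi> j = op_of_kind \<sigma> (\<kappa> j) (\<iota> j)" and stays: "\<not> opens_block (\<kappa> j)"
    and IH: "\<And>S' ys. stack_shape S' = word_shape ys \<Longrightarrow>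
      word_vec \<psi> k (Suc j) n ys = run_weight \<sigma> \<kappa> \<iota> k (Suc j) n S' * touch_monomial \<kappa> (Suc j) n ys"
    and shape: "stack_shape S = word_shape xs"
  shows "word_vec \<psi> k j (Suc n) xs = run_weight \<sigma> \<kappa> \<iota> k j (Suc n) S * touch_monomial \<kappa> j (Suc n) xs"
proof (cases xs)
  case Nil
  then show ?thesis
    using shape stays by (simp add: word_vec_Suc \<psi> op_of_kind_Nil stack_shape_Nil_iff step_def)
next
  case (Cons x rest)
  obtain q b t where xs: "xs = (q, b, t) # rest"
    using Cons by (cases x) auto
  obtain X S' where S: "S = (X, q, b) # S'" and rest: "stack_shape S' = word_shape rest"
    using shape xs stack_shape_Cons_iff by blast
  have "S' = [] \<longleftrightarrow> rest = []"
    using rest by (auto simp: stack_shape_def word_shape_def)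
  moreover have "stack_shape ((X, q, b') # S') = word_shape ((q, b', t) # rest)" for b'
    using rest by (simp add: stack_shape_def word_shape_def)
  ultimately show ?thesis
    using IH[of S' rest] IH[of "(X, q, _) # S'" "(q, _, t) # rest"] rest stays
    by (auto simp: word_vec_Suc \<psi> op_of_kind_Cons xs S step_def touch_monomial_Cons
        touch_monomial_def[of _ "Suc j"])
qed

lemma word_vec_factorization:
  assumes "\<And>p. j \<le> p \<Longrightarrow> p < j + n \<Longrightarrow> \<psi> p = op_of_kind \<sigma> (\<kappa> p) (\<iota> p)"
    and "stack_shape S = word_shape xs"
  shows "word_vec \<psi> k j n xs = run_weight \<sigma> \<kappa> \<iota> k j n S * touch_monomial \<kappa> j n xs"
  using assms
proof (induction n arbitrary: j S xs)
  case 0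
  then show ?case
    by (cases xs rule: remdups_adj.cases)
      (auto simp: word_vec_def touch_monomial_def eta_def stack_shape_Nil_iff stack_shape_Cons_iff)
next
  case (Suc n)
  have \<psi>: "\<psi> j = op_of_kind \<sigma> (\<kappa> j) (\<iota> j)"
    using Suc.prems(1) by simp
  have IH: "word_vec \<psi> k (Suc j) n ys =
      run_weight \<sigma> \<kappa> \<iota> k (Suc j) n S' * touch_monomial \<kappa> (Suc j) n ys"
    if "stack_shape S' = word_shape ys" for S' ys
    using Suc.IH[OF _ that] Suc.prems(1) by simp
  show ?case
    using word_vec_factorization_step_opening[OF \<psi> _ IH Suc.prems(2)]
      word_vec_factorization_step_non_opening[OF \<psi> _ IH Suc.prems(2)]
    by blast
qed

section \<open>Symmetric measures and the inner product with \<open>\<eta>\<close>\<close>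

lemma distr_uminus_symmetric:
  fixes M :: "real measure"
  assumes sets: "sets M = sets borel"
    and sym: "\<And>A. A \<in> sets borel \<Longrightarrow> emeasure M (uminus ` A) = emeasure M A"
  shows "distr M borel uminus = M"
proof (rule measure_eqI)
  show "sets (distr M borel uminus) = sets M"
    using sets by simp
next
  fix A assume "A \<in> sets (distr M borel uminus)"
  then have A: "A \<in> sets borel" by simp
  have "uminus -` A \<inter> space M = uminus ` A"
    using sets_eq_imp_space_eq[OF sets] by (auto simp: image_iff) (metis minus_minus)
  moreover have "uminus \<in> measurable M borel"
    by (simp add: measurable_cong_sets[OF sets refl])
  ultimately show "emeasure (distr M borel uminus) A = emeasure M A"
    using A sym[OF A] by (simp add: emeasure_distr)
qed

lemma integral_odd_function_symmetric:
  fixes M :: "real measure" and f :: "real \<Rightarrow> 'b::{banach, second_countable_topology}"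
  assumes sets: "sets M = sets borel"
    and sym: "\<And>A. A \<in> sets borel \<Longrightarrow> emeasure M (uminus ` A) = emeasure M A"
    and f: "f \<in> borel_measurable borel"
    and odd: "\<And>s. f (- s) = - f s"
  shows "integral\<^sup>L M f = 0"
proof -
  have "integral\<^sup>L M f = integral\<^sup>L (distr M borel uminus) f"
    using distr_uminus_symmetric[OF sets sym] by simp
  also have "\<dots> = integral\<^sup>L M (\<lambda>s. f (- s))"
    by (rule integral_distr[OF _ f]) (simp add: measurable_cong_sets[OF sets refl])
  also have "\<dots> = - integral\<^sup>L M f"
    by (simp add: odd)
  finally have "integral\<^sup>L M f + integral\<^sup>L M f = 0"
    by (simp add: eq_neg_iff_add_eq_0)
  then show ?thesis
    by (metis scaleR_2 scaleR_eq_0_iff zero_neq_numeral)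
qed

lemma moment_odd_eq_0:
  assumes "sets (\<sigma> q) = sets borel"
    and "\<And>A. A \<in> sets borel \<Longrightarrow> emeasure (\<sigma> q) (uminus ` A) = emeasure (\<sigma> q) A"
    and "odd m"
  shows "moment \<sigma> q m = 0"
  unfolding moment_def
  using assms by (intro integral_odd_function_symmetric) (auto simp: power_minus_odd)

lemma run_weight_nonzero_imp_odd_touch_count:
  assumes "run_weight \<sigma> \<kappa> \<iota> k 1 R S \<noteq> 0" "1 \<le> p" "p \<le> R" "opens_block (\<kappa> p)"
    and "sets (\<sigma> (\<iota> p)) = sets borel"
    and "\<And>A. A \<in> sets borel \<Longrightarrow> emeasure (\<sigma> (\<iota> p)) (uminus ` A) = emeasure (\<sigma> (\<iota> p)) A"
  shows "odd (touch_count \<kappa> (Suc p) (R - p) 0)"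
  using run_weight_nonzero_imp_moment[OF assms(1), of p]
    moment_odd_eq_0[of \<sigma> "\<iota> p", OF assms(5,6)] assms(2-4)
  by auto

lemma eta_eq_0: "length xs \<noteq> 1 \<Longrightarrow> eta k xs = 0"
  by (cases xs rule: remdups_adj.cases) (auto simp: eta_def)

lemma fock_inner_eta: "fock_inner \<sigma> N W (eta k) = deg_inner \<sigma> N 1 W (eta k)"
proof -
  have "deg_inner \<sigma> N (Suc n) W (eta k) = 0" if "n \<noteq> 0" for n
    using that by (simp add: deg_inner_def eta_eq_0)
  then show ?thesis
    unfolding fock_inner_def by (subst suminf_finite[of "{0}"]) auto
qed

lemma fock_inner_eta_nonzero_imp:
  assumes sets: "sets (\<sigma> k) = sets borel" and fin: "finite_measure (\<sigma> k)"
    and W: "\<And>b. (\<lambda>s. W [(k, b, s)]) \<in> borel_measurable borel"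
    and nz: "fock_inner \<sigma> N W (eta k) \<noteq> 0"
  shows "\<exists>b. (LINT s | \<sigma> k. W [(k, b, s)]) \<noteq> 0"
proof -
  from nz obtain ks bs where I:
    "(LINT x | PiM {..<Suc 0} (\<lambda>i. \<sigma> (ks ! i)).
        W [(ks ! 0, bs ! 0, x 0)] * cnj (eta k [(ks ! 0, bs ! 0, x 0)])) \<noteq> 0"
    unfolding fock_inner_eta deg_inner_def by simp (meson sum.neutral)
  then have k: "ks ! 0 = k"
    by (auto simp: eta_def split: if_splits)
  interpret product_sigma_finite "\<lambda>i::nat. \<sigma> k"
    using fin by (simp add: product_sigma_finite_def finite_measure.axioms(1))
  have "PiM {..<Suc 0} (\<lambda>i. \<sigma> (ks ! i)) = PiM {0::nat} (\<lambda>i. \<sigma> k)"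
    using k by (intro PiM_cong) auto
  with I k have "(LINT x | PiM {0::nat} (\<lambda>i. \<sigma> k). W [(k, bs ! 0, x 0)]) \<noteq> 0"
    by (simp add: eta_def)
  moreover have "(LINT x | PiM {0::nat} (\<lambda>i. \<sigma> k). W [(k, bs ! 0, x 0)]) =
      (LINT s | \<sigma> k. W [(k, bs ! 0, s)])"
    by (rule product_integral_singleton) (simp add: measurable_cong_sets[OF sets refl] W)
  ultimately show ?thesis by auto
qed

lemma fock_inner_nonzero_imp_run_weight:
  assumes sets: "sets (\<sigma> k') = sets borel" and fin: "finite_measure (\<sigma> k')"
    and sym: "\<And>A. A \<in> sets borel \<Longrightarrow> emeasure (\<sigma> k') (uminus ` A) = emeasure (\<sigma> k') A"
    and \<psi>: "\<And>p. 1 \<le> p \<Longrightarrow> p \<le> R \<Longrightarrow> \<psi> p = op_of_kind \<sigma> (\<kappa> p) (\<iota> p)"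
    and nz: "fock_inner \<sigma> N (apply_word \<psi> R (eta k)) (eta k') \<noteq> 0"
  obtains b where "run_weight \<sigma> \<kappa> \<iota> k 1 R [(0, k', b)] \<noteq> 0" "even (touch_count \<kappa> 1 R 0)"
proof -
  define T where "T = touch_count \<kappa> 1 R 0"
  have kernel: "apply_word \<psi> R (eta k) [(k', b, s)] =
      run_weight \<sigma> \<kappa> \<iota> k 1 R [(0, k', b)] * complex_of_real s ^ T" for b s
    using word_vec_factorization[of 1 R \<psi> \<sigma> \<kappa> \<iota> "[(0, k', b)]" "[(k', b, s)]" k] \<psi>
    by (simp add: apply_word_eta touch_monomial_def T_def stack_shape_def word_shape_def)
  obtain b where "(LINT s | \<sigma> k'. apply_word \<psi> R (eta k) [(k', b, s)]) \<noteq> 0"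
    using fock_inner_eta_nonzero_imp[OF sets fin _ nz] kernel by auto
  then have "run_weight \<sigma> \<kappa> \<iota> k 1 R [(0, k', b)] \<noteq> 0" "moment \<sigma> k' T \<noteq> 0"
    by (simp_all add: kernel moment_def)
  then show thesis
    using that moment_odd_eq_0[of \<sigma> k', OF sets sym] T_def by blast
qed

section \<open>The noncrossing partition of an accepting run\<close>

definition stack_inv :: "(nat \<Rightarrow> op_kind) \<Rightarrow> nat \<Rightarrow> nat \<Rightarrow> stack \<Rightarrow> bool" where
  "stack_inv \<kappa> k p S \<longleftrightarrow> S \<noteq> [] \<and> fst (last S) = 0 \<and> fst (snd (last S)) = k \<and>
     sorted_wrt (>) (map fst S) \<and>
     (\<forall>X \<in> set (map fst S). X < p \<and> (X = 0 \<or> 1 \<le> X \<and> opens_block (\<kappa> X)))"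

lemma stack_inv_step:
  assumes "step \<kappa> \<iota> p S = Some S'" "stack_inv \<kappa> k p S" "1 \<le> p"
  shows "stack_inv \<kappa> k (Suc p) S'"
proof (cases "opens_block (\<kappa> p)")
  case True
  then show ?thesis
    using assms by (auto simp: step_def stack_inv_def less_Suc_eq split: if_splits)
      (metis fst_conv not_gr0)+
next
  case False
  then obtain X b S'' where S: "S = (X, \<iota> p, b) # S''" and S'':
    "S' = (if closes_block (\<kappa> p) then S'' else (X, \<iota> p, kind_exp (\<kappa> p)) # S'')"
    "closes_block (\<kappa> p) \<Longrightarrow> S'' \<noteq> []"
    using assms(1) by (auto simp: step_def split: list.splits if_splits)
  show ?thesis
    using assms(2) S'' unfolding S by (cases S'') (auto simp: stack_inv_def)
qed

lemma sorted_less_hd: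
  fixes S :: stack
  assumes "sorted_wrt (>) (map fst S)" "X \<in> set (map fst S)" "X \<noteq> fst (hd S)"
  shows "X < fst (hd S)"
  using assms by (cases S) auto

lemma hd_eq_if_fst_hd_eq:
  fixes S :: stack
  assumes "sorted_wrt (>) (map fst S)" "(X, q, b) \<in> set S" "fst (hd S) = X"
  shows "hd S = (X, q, b)"
  using assms by (cases S) force+

lemma block_ok_if_consecutive:
  fixes B :: "nat set"
  assumes "finite B" "B \<noteq> {}" "even (card B)"
    and consecutive: "\<And>p p'. p \<in> B \<Longrightarrow> p' \<in> B \<Longrightarrow> p < p' \<Longrightarrow> {p<..<p'} \<inter> B = {} \<Longrightarrow>
      \<iota> p = \<iota> p' \<and> \<epsilon> p \<noteq> \<epsilon> p'"
  shows "block_ok \<iota> \<epsilon> B"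
proof -
  define qs where "qs = sorted_list_of_set B"
  have sorted: "sorted_wrt (<) qs" and set: "set qs = B" and len: "length qs = card B"
    using assms(1) by (simp_all add: qs_def)
  have index_less: "a < b" if "qs ! a < qs ! b" "a < length qs" for a b
    using sorted_nth_mono[of qs b a] sorted that by (metis not_le strict_sorted_iff)
  have neighbours: "\<iota> (qs ! i) = \<iota> (qs ! Suc i) \<and> \<epsilon> (qs ! i) \<noteq> \<epsilon> (qs ! Suc i)"
    if i: "Suc i < length qs" for i
  proof (rule consecutive)
    show "qs ! i \<in> B" "qs ! Suc i \<in> B" "qs ! i < qs ! Suc i"
      using set i sorted_wrt_nth_less[OF sorted, of i "Suc i"] by auto
    show "{qs ! i<..<qs ! Suc i} \<inter> B = {}"
    proof (rule ccontr)
      assume "{qs ! i<..<qs ! Suc i} \<inter> B \<noteq> {}"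
      then obtain m where "m < length qs" "qs ! i < qs ! m" "qs ! m < qs ! Suc i"
        by (auto simp: set[symmetric] in_set_conv_nth)
      then show False
        using index_less[of i m] index_less[of m "Suc i"] i by simp
    qed
  qed
  have ne: "qs \<noteq> []" and odd: "odd (length qs - 1)"
    using assms(2,3) set len by auto
  have along: "\<iota> (qs ! i) = \<iota> (hd qs) \<and> (\<epsilon> (qs ! i) \<longleftrightarrow> (\<epsilon> (hd qs) \<longleftrightarrow> even i))"
    if "i < length qs" for i
    using that
  proof (induction i)
    case 0
    then show ?case using ne by (simp add: hd_conv_nth)
  next
    case (Suc i)
    then show ?case using neighbours[of i] by auto
  qed
  have "\<epsilon> (last qs) \<noteq> \<epsilon> (hd qs)"
    using along[of "length qs - 1"] ne odd by (simp add: last_conv_nth)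
  then show ?thesis
    unfolding block_ok_def Let_def qs_def[symmetric] using along neighbours by blast
qed

text \<open>Position \<open>p\<close> acts on the stack entry created at position \<open>label p\<close> (label \<open>0\<close>
  for the entry of \<open>\<eta>\<^bsub>k'\<^esub>\<close>), and the sets of positions with a common label form \<open>\<pi>\<close>.\<close>

locale accepting_run =
  fixes \<kappa> :: "nat \<Rightarrow> op_kind" and \<iota> :: "nat \<Rightarrow> nat" and R k' :: nat and b0 :: bool
    and \<epsilon> :: "nat \<Rightarrow> bool"
  assumes R_pos: "1 \<le> R"
    and run_accepts: "\<exists>e. run \<kappa> \<iota> 1 R [(0, k', b0)] = Some [e]"
    and first_not_opening: "\<not> opens_block (\<kappa> 1)"
    and last_not_closing: "R = 1 \<or> \<not> closes_block (\<kappa> R)"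
    and even_bottom_touches: "even (touch_count \<kappa> 1 R 0)"
    and odd_touches_after_opening:
      "\<And>p. 1 \<le> p \<Longrightarrow> p \<le> R \<Longrightarrow> opens_block (\<kappa> p) \<Longrightarrow> odd (touch_count \<kappa> (Suc p) (R - p) 0)"
    and kind_exp_eq: "\<And>p. 1 \<le> p \<Longrightarrow> p \<le> R \<Longrightarrow> kind_exp (\<kappa> p) = \<epsilon> p"
begin

definition stack_at :: "nat \<Rightarrow> stack" where
  "stack_at p = the (run \<kappa> \<iota> 1 (p - 1) [(0, k', b0)])"

abbreviation live_labels :: "nat \<Rightarrow> nat set" where
  "live_labels p \<equiv> set (map fst (stack_at p))"

definition label :: "nat \<Rightarrow> nat" where
  "label p = (if opens_block (\<kappa> p) then p else fst (hd (stack_at p)))"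

definition block :: "nat \<Rightarrow> nat set" where
  "block X = {p. 1 \<le> p \<and> p \<le> R \<and> label p = X}"

lemma run_stack_at:
  assumes "1 \<le> p" "p \<le> Suc R"
  shows "run \<kappa> \<iota> 1 (p - 1) [(0, k', b0)] = Some (stack_at p)"
proof -
  have "run \<kappa> \<iota> 1 ((p - 1) + (R - (p - 1))) [(0, k', b0)] \<noteq> None"
    using assms run_accepts by auto
  then show ?thesis
    unfolding run_add stack_at_def by (auto split: option.splits)
qed

lemma stack_at_1: "stack_at 1 = [(0, k', b0)]"
  by (simp add: stack_at_def)

lemma stack_at_end: "\<exists>e. stack_at (Suc R) = [e]"
  using run_accepts by (auto simp: stack_at_def)

lemma step_stack_at:
  assumes "1 \<le> p" "p \<le> R"
  shows "step \<kappa> \<iota> p (stack_at p) = Some (stack_at (Suc p))"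
proof -
  have "run \<kappa> \<iota> 1 (Suc (p - 1)) [(0, k', b0)] = Some (stack_at (Suc p))"
    using run_stack_at[of "Suc p"] assms by simp
  then show ?thesis
    unfolding run_Suc_last using run_stack_at[of p] assms by simp
qed

lemma stack_inv_stack_at:
  assumes "1 \<le> p" "p \<le> Suc R"
  shows "stack_inv \<kappa> k' p (stack_at p)"
  using assms
proof (induction p rule: dec_induct)
  case base
  then show ?case by (simp add: stack_at_def stack_inv_def)
next
  case (step p)
  then show ?case using stack_inv_step[OF step_stack_at] by simp
qed

lemma stack_at_inv:
  assumes "1 \<le> p" "p \<le> Suc R"
  shows "stack_at p \<noteq> []" "sorted_wrt (>) (map fst (stack_at p))"
    "\<And>X. X \<in> live_labels p \<Longrightarrow> X < p \<and> (X = 0 \<or> 1 \<le> X \<and> opens_block (\<kappa> X))"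
    "fst (last (stack_at p)) = 0" "fst (snd (last (stack_at p))) = k'"
  using stack_inv_stack_at[OF assms] unfolding stack_inv_def by auto

lemma stack_at_Suc:
  assumes "1 \<le> p" "p \<le> R"
  shows "\<not> opens_block (\<kappa> p) \<Longrightarrow> hd (stack_at p) = (label p, \<iota> p, \<not> kind_exp (\<kappa> p))"
    and "\<not> opens_block (\<kappa> p) \<Longrightarrow> \<not> closes_block (\<kappa> p) \<Longrightarrow>
      stack_at (Suc p) = (label p, \<iota> p, kind_exp (\<kappa> p)) # tl (stack_at p)"
    and "closes_block (\<kappa> p) \<Longrightarrow> stack_at (Suc p) = tl (stack_at p) \<and> tl (stack_at p) \<noteq> []"
    and "opens_block (\<kappa> p) \<Longrightarrow> stack_at (Suc p) = (p, \<iota> p, kind_exp (\<kappa> p)) # stack_at p \<and> label p = p"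
proof -
  have step: "step \<kappa> \<iota> p (stack_at p) = Some (stack_at (Suc p))"
    by (rule step_stack_at[OF assms])
  obtain X q b S where S: "stack_at p = (X, q, b) # S"
    using stack_at_inv(1) assms by (cases "stack_at p") auto
  have "closes_block \<kappa>' \<Longrightarrow> \<not> opens_block \<kappa>'" for \<kappa>'
    by (cases \<kappa>') auto
  then show "\<not> opens_block (\<kappa> p) \<Longrightarrow> hd (stack_at p) = (label p, \<iota> p, \<not> kind_exp (\<kappa> p))"
    and "\<not> opens_block (\<kappa> p) \<Longrightarrow> \<not> closes_block (\<kappa> p) \<Longrightarrow>
      stack_at (Suc p) = (label p, \<iota> p, kind_exp (\<kappa> p)) # tl (stack_at p)"
    and "closes_block (\<kappa> p) \<Longrightarrow> stack_at (Suc p) = tl (stack_at p) \<and> tl (stack_at p) \<noteq> []"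
    and "opens_block (\<kappa> p) \<Longrightarrow> stack_at (Suc p) = (p, \<iota> p, kind_exp (\<kappa> p)) # stack_at p \<and> label p = p"
    using step S by (auto simp: step_def label_def split: if_splits)
qed

lemma label_hd:
  assumes "1 \<le> p" "p \<le> R" "\<not> opens_block (\<kappa> p)"
  shows "fst (hd (stack_at p)) = label p" "label p \<in> live_labels p" "label p < p"
proof -
  show hd: "fst (hd (stack_at p)) = label p"
    using assms by (simp add: label_def)
  show "label p \<in> live_labels p"
    using hd stack_at_inv(1) assms by (cases "stack_at p") auto
  then show "label p < p"
    using stack_at_inv(3) assms by auto
qed

lemma label_le:
  assumes "1 \<le> p" "p \<le> R"
  shows "label p \<le> p"
  using label_hd(3)[OF assms] by (cases "opens_block (\<kappa> p)") (auto simp: label_def)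

lemma label_cases:
  assumes "1 \<le> p" "p \<le> R"
  shows "label p = 0 \<or>
    1 \<le> label p \<and> label p \<le> R \<and> opens_block (\<kappa> (label p)) \<and> label (label p) = label p"
proof (cases "opens_block (\<kappa> p)")
  case True
  then show ?thesis using assms by (simp add: label_def)
next
  case False
  then have "label p = 0 \<or> 1 \<le> label p \<and> opens_block (\<kappa> (label p))" "label p < p"
    using label_hd[OF assms] stack_at_inv(3)[of p] assms by auto
  then show ?thesis
    using assms by (auto simp: label_def[of "label p"])
qed

lemma entry_kept:
  assumes "1 \<le> p" "p \<le> R" "(X, q, b) \<in> set (stack_at p)" "X \<noteq> label p"
  shows "(X, q, b) \<in> set (stack_at (Suc p))"
proof (cases "opens_block (\<kappa> p)")
  case True
  then show ?thesis using stack_at_Suc(4)[OF assms(1,2)] assms(3) by simp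
next
  case False
  then have "(X, q, b) \<in> set (tl (stack_at p))"
    using stack_at_Suc(1)[OF assms(1,2)] assms(3,4) by (cases "stack_at p") auto
  then show ?thesis
    using stack_at_Suc(2,3)[OF assms(1,2)] False by (cases "closes_block (\<kappa> p)") auto
qed

lemma entry_after_non_closing:
  assumes "1 \<le> p" "p \<le> R" "\<not> closes_block (\<kappa> p)"
  shows "(label p, \<iota> p, kind_exp (\<kappa> p)) \<in> set (stack_at (Suc p))"
  using stack_at_Suc(2,4)[OF assms(1,2)] assms(3) by (cases "opens_block (\<kappa> p)") auto

lemma live_label_Suc:
  assumes "1 \<le> p" "p \<le> R" "X \<in> live_labels (Suc p)"
  shows "X \<in> live_labels p \<or> X = p"
proof (cases "opens_block (\<kappa> p)")
  case True
  then show ?thesis using stack_at_Suc(4)[OF assms(1,2)] assms(3) by auto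
next
  case False
  have "set (map fst (tl (stack_at p))) \<subseteq> live_labels p"
    by (cases "stack_at p") auto
  then show ?thesis
    using stack_at_Suc(2,3)[OF assms(1,2)] label_hd(2)[OF assms(1,2) False] assms(3) False
    by (cases "closes_block (\<kappa> p)") auto
qed

lemma closing_removes_label:
  assumes "1 \<le> p" "p \<le> R" "closes_block (\<kappa> p)"
  shows "label p \<notin> live_labels (Suc p)"
proof -
  have "\<not> opens_block (\<kappa> p)"
    using assms(3) by (cases "\<kappa> p") auto
  then have "fst (hd (stack_at p)) = label p"
    using label_hd assms by auto
  then show ?thesis
    using stack_at_inv(1,2)[of p] stack_at_Suc(3)[OF assms] assms by (cases "stack_at p") auto
qed

lemma removed_label_closes:
  assumes "1 \<le> p" "p \<le> R" "X \<in> live_labels p" "X \<notin> live_labels (Suc p)"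
  shows "label p = X \<and> closes_block (\<kappa> p)"
proof -
  obtain q b where "(X, q, b) \<in> set (stack_at p)"
    using assms(3) by auto
  then have X: "X = label p"
    using entry_kept[OF assms(1,2)] assms(4) by force
  moreover have "closes_block (\<kappa> p)"
  proof (rule ccontr)
    assume "\<not> closes_block (\<kappa> p)"
    then have "label p \<in> live_labels (Suc p)"
      using entry_after_non_closing[OF assms(1,2)] by force
    then show False
      using X assms(4) by simp
  qed
  ultimately show ?thesis by simp
qed

lemma removed_label_stays_removed:
  assumes "X \<notin> live_labels p" "X < p" "1 \<le> p" "p \<le> p'" "p' \<le> Suc R"
  shows "X \<notin> live_labels p'"
  using assms(4,5)
proof (induction p' rule: dec_induct)
  case base
  show ?case using assms(1) by simp
next
  case (step p')
  then show ?case using live_label_Suc[of p' X] assms(2,3) by auto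
qed

lemma live_label_between:
  assumes "X \<in> live_labels p" "X \<in> live_labels p''" "1 \<le> p" "p \<le> p'" "p' \<le> p''" "p'' \<le> Suc R"
  shows "X \<in> live_labels p'"
proof (rule ccontr)
  assume "X \<notin> live_labels p'"
  moreover have "X < p"
    using stack_at_inv(3)[of p X] assms by simp
  ultimately show False
    using removed_label_stays_removed[of X p' p''] assms by simp
qed

lemma entry_persists:
  assumes "(X, q, b) \<in> set (stack_at p)" "1 \<le> p" "p \<le> p''" "p'' \<le> Suc R"
    and "\<And>p'. p \<le> p' \<Longrightarrow> p' < p'' \<Longrightarrow> label p' \<noteq> X"
  shows "(X, q, b) \<in> set (stack_at p'')"
  using assms(3-5)
proof (induction p'' rule: dec_induct)
  case base
  show ?case using assms(1) by simp
next
  case (step p')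
  have "X \<noteq> label p'"
    using step.prems(2)[of p'] step.hyps(1) by auto
  then show ?case
    using step entry_kept[of p' X q b] assms(2) by simp
qed

lemma removed_label_closes_between:
  assumes "X \<in> live_labels p" "X \<notin> live_labels p''" "1 \<le> p" "p \<le> p''" "p'' \<le> Suc R"
  shows "\<exists>p'. p \<le> p' \<and> p' < p'' \<and> label p' = X \<and> closes_block (\<kappa> p')"
  using assms(4,2,5)
proof (induction p'' rule: dec_induct)
  case base
  then show ?case using assms(1) by simp
next
  case (step p')
  then show ?case
    using removed_label_closes[of p' X] assms(3) by (cases "X \<in> live_labels p'") auto
qed

lemma label_of_later_member:
  assumes "1 \<le> p" "p \<le> R" "label p = X" "X < p"
  shows "\<not> opens_block (\<kappa> p)" "X \<in> live_labels p" "fst (hd (stack_at p)) = X"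
proof -
  show np: "\<not> opens_block (\<kappa> p)"
    using assms by (auto simp: label_def)
  show "X \<in> live_labels p" "fst (hd (stack_at p)) = X"
    using label_hd[OF assms(1,2) np] assms(3) by auto
qed

lemma not_closing_before_member:
  assumes "1 \<le> p" "p < p'" "p' \<le> R" "label p = label p'"
  shows "\<not> closes_block (\<kappa> p)"
proof
  assume "closes_block (\<kappa> p)"
  moreover have "p \<le> R"
    using assms by simp
  ultimately have "label p \<notin> live_labels (Suc p)"
    using closing_removes_label[of p] assms(1) by simp
  moreover have "label p \<le> p"
    using label_le[of p] assms(1-3) by simp
  ultimately have "label p \<notin> live_labels p'"
    using removed_label_stays_removed[of "label p" "Suc p" p'] assms by simp
  moreover have "label p \<in> live_labels p'"
    using label_of_later_member(2)[of p' "label p"] assms \<open>label p \<le> p\<close> by simp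
  ultimately show False by simp
qed

lemma live_label_after_member:
  assumes "1 \<le> a" "a < p" "p \<le> c" "c \<le> R" "label a = label c"
  shows "label a \<in> live_labels p"
proof -
  have "\<not> closes_block (\<kappa> a)"
    using not_closing_before_member[of a c] assms by simp
  then have "label a \<in> live_labels (Suc a)"
    using entry_after_non_closing[of a] assms by force
  moreover have "label a \<in> live_labels c"
    using label_of_later_member(2)[of c "label a"] label_le[of a] assms by simp
  ultimately show ?thesis
    using live_label_between[of "label a" "Suc a" c p] assms by simp
qed

text \<open>The entry of \<open>a\<close> is alive below the top at \<open>b\<close>, and the entry of \<open>b\<close> is alive
  below the top at \<open>c\<close>; as labels decrease down the stack, \<open>label a < label b < label a\<close>.\<close>

lemma labels_noncrossing:
  assumes "1 \<le> a" "a < b" "b < c" "c < d" "d \<le> R" "label a = label c" "label b = label d"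
  shows "label a = label b"
proof (rule ccontr)
  assume ne: "label a \<noteq> label b"
  have Xb: "label a \<in> live_labels b" and Yc: "label b \<in> live_labels c"
    using live_label_after_member[of a b c] live_label_after_member[of b c d] assms by simp_all
  have Xc: "fst (hd (stack_at c)) = label a"
    using label_of_later_member(3)[of c "label a"] label_le[of a] assms by simp
  have "label a < label b"
  proof (cases "opens_block (\<kappa> b)")
    case True
    then show ?thesis
      using stack_at_inv(3)[of b "label a"] Xb assms by (simp add: label_def)
  next
    case False
    then show ?thesis
      using label_hd(1)[of b] sorted_less_hd[of "stack_at b" "label a"] stack_at_inv(2)[of b]
        Xb ne assms
      by simp
  qed
  moreover have "label b < label a"
    using sorted_less_hd[of "stack_at c" "label b"] stack_at_inv(2)[of c] Yc Xc ne assms by simp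
  ultimately show False by simp
qed

lemma consecutive_block_members:
  assumes "1 \<le> p" "p < p'" "p' \<le> R" "label p = label p'"
    and "\<And>p''. p < p'' \<Longrightarrow> p'' < p' \<Longrightarrow> label p'' \<noteq> label p"
  shows "\<iota> p = \<iota> p' \<and> kind_exp (\<kappa> p) \<noteq> kind_exp (\<kappa> p')"
proof -
  have "\<not> closes_block (\<kappa> p)"
    using not_closing_before_member[of p p'] assms by simp
  then have "(label p, \<iota> p, kind_exp (\<kappa> p)) \<in> set (stack_at (Suc p))"
    using entry_after_non_closing[of p] assms by simp
  then have entry: "(label p, \<iota> p, kind_exp (\<kappa> p)) \<in> set (stack_at p')"
    by (rule entry_persists) (use assms in auto)
  have "label p < p'"
    using label_le[of p] assms by simp
  then have np: "\<not> opens_block (\<kappa> p')" and "fst (hd (stack_at p')) = label p"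
    using label_of_later_member[of p' "label p"] assms by auto
  then have "hd (stack_at p') = (label p, \<iota> p, kind_exp (\<kappa> p))"
    using hd_eq_if_fst_hd_eq[OF _ entry] stack_at_inv(2)[of p'] assms by simp
  then show ?thesis
    using stack_at_Suc(1)[of p'] np assms by simp
qed

definition later_count :: "nat \<Rightarrow> nat \<Rightarrow> nat" where
  "later_count p X = card {p'. p \<le> p' \<and> p' \<le> R \<and> label p' = X}"

lemma later_count_Suc:
  assumes "p \<le> R"
  shows "later_count p X = (if label p = X then 1 else 0) + later_count (Suc p) X"
proof -
  have "{p'. p \<le> p' \<and> p' \<le> R \<and> label p' = X} =
      (if label p = X then insert p else id) {p'. Suc p \<le> p' \<and> p' \<le> R \<and> label p' = X}"
    using assms by (auto simp: le_less Suc_le_eq)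
  moreover have "finite {p'. Suc p \<le> p' \<and> p' \<le> R \<and> label p' = X}"
    by (rule finite_subset[of _ "{..R}"]) auto
  ultimately show ?thesis
    unfolding later_count_def by simp
qed

lemma label_eq_nth_iff:
  assumes "1 \<le> p" "p \<le> R" "i < length (stack_at p)"
  shows "label p = fst (stack_at p ! i) \<longleftrightarrow> \<not> opens_block (\<kappa> p) \<and> i = 0"
proof (cases "opens_block (\<kappa> p)")
  case True
  then show ?thesis
    using stack_at_inv(3)[of p "fst (stack_at p ! i)"] assms by (force simp: label_def)
next
  case False
  have "fst (stack_at p ! i) < fst (stack_at p ! 0)" if "0 < i"
    using sorted_wrt_nth_less[OF stack_at_inv(2)[of p, unfolded sorted_wrt_map], of 0 i] that assms
      by simp
  moreover have "label p = fst (stack_at p ! 0)"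
    using label_hd(1)[OF assms(1,2) False] stack_at_inv(1)[of p] assms by (simp add: hd_conv_nth)
  ultimately show ?thesis
    using False by (cases i) auto
qed

lemma stack_at_Suc_nth:
  assumes "1 \<le> p" "p \<le> R" "i < length (stack_at p)"
  shows "opens_block (\<kappa> p) \<Longrightarrow> fst (stack_at (Suc p) ! Suc i) = fst (stack_at p ! i)"
    and "closes_block (\<kappa> p) \<Longrightarrow> 0 < i \<Longrightarrow> fst (stack_at (Suc p) ! (i - 1)) = fst (stack_at p ! i)"
    and "\<not> opens_block (\<kappa> p) \<Longrightarrow> \<not> closes_block (\<kappa> p) \<Longrightarrow>
      fst (stack_at (Suc p) ! i) = fst (stack_at p ! i)"
proof -
  show "opens_block (\<kappa> p) \<Longrightarrow> fst (stack_at (Suc p) ! Suc i) = fst (stack_at p ! i)"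
    using stack_at_Suc(4)[OF assms(1,2)] by simp
  show "closes_block (\<kappa> p) \<Longrightarrow> 0 < i \<Longrightarrow> fst (stack_at (Suc p) ! (i - 1)) = fst (stack_at p ! i)"
    using stack_at_Suc(3)[OF assms(1,2)] assms(3) by (simp add: nth_tl)
  show "\<not> opens_block (\<kappa> p) \<Longrightarrow> \<not> closes_block (\<kappa> p) \<Longrightarrow>
      fst (stack_at (Suc p) ! i) = fst (stack_at p ! i)"
    using stack_at_Suc(2)[OF assms(1,2)] label_hd(1)[OF assms(1,2)] stack_at_inv(1)[of p] assms(1-3)
    by (cases i) (auto simp: hd_conv_nth nth_tl)
qed

lemma touch_count_eq_later_count:
  assumes "p + n = Suc R" "1 \<le> p" "i < length (stack_at p)"
  shows "touch_count \<kappa> p n i = later_count p (fst (stack_at p ! i))"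
  using assms
proof (induction n arbitrary: p i)
  case 0
  then show ?case by (simp add: later_count_def)
next
  case (Suc n)
  then have p: "1 \<le> p" "p \<le> R" and IH: "\<And>i. i < length (stack_at (Suc p)) \<Longrightarrow>
      touch_count \<kappa> (Suc p) n i = later_count (Suc p) (fst (stack_at (Suc p) ! i))"
    by auto
  note later = later_count_Suc[OF p(2)] label_eq_nth_iff[OF p Suc.prems(3)]
  consider "opens_block (\<kappa> p)" | "closes_block (\<kappa> p)" "i = 0" | "closes_block (\<kappa> p)" "0 < i"
    | "\<not> opens_block (\<kappa> p)" "\<not> closes_block (\<kappa> p)"
    by blast
  then show ?case
  proof cases
    case 1
    then show ?thesis
      using IH[of "Suc i"] stack_at_Suc(4)[OF p] stack_at_Suc_nth(1)[OF p Suc.prems(3)]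
        later Suc.prems(3)
      by simp
  next
    case 2
    have "label p' \<noteq> label p" if "Suc p \<le> p'" "p' \<le> R" for p'
      using not_closing_before_member[of p p'] 2 p that by auto
    then have "later_count (Suc p) (label p) = 0"
      by (simp add: later_count_def)
    then show ?thesis
      using 2 later by (cases "\<kappa> p") auto
  next
    case 3
    then show ?thesis
      using IH[of "i - 1"] stack_at_Suc(3)[OF p] stack_at_Suc_nth(2)[OF p Suc.prems(3)]
        later Suc.prems(3)
      by (cases "\<kappa> p") auto
  next
    case 4
    then show ?thesis
      using IH[of i] stack_at_Suc(2)[OF p] stack_at_Suc_nth(3)[OF p Suc.prems(3)] later Suc.prems(3)
        stack_at_inv(1)[of p]
      by (cases "\<kappa> p") auto
  qed
qed

lemma first_position: "\<not> closes_block (\<kappa> 1)" "label 1 = 0" "\<iota> 1 = k'"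
proof -
  show "\<not> closes_block (\<kappa> 1)"
    using stack_at_Suc(3)[of 1] R_pos stack_at_1 by auto
  have "hd (stack_at 1) = (label 1, \<iota> 1, \<not> kind_exp (\<kappa> 1))"
    using stack_at_Suc(1)[of 1] R_pos first_not_opening by simp
  then show "label 1 = 0" "\<iota> 1 = k'"
    using stack_at_1 by (metis fst_conv list.sel(1) snd_conv)+
qed

lemma last_position: "\<not> opens_block (\<kappa> R)" "\<not> closes_block (\<kappa> R)" "label R = 0" "\<iota> R = k'"
proof -
  obtain e where final: "stack_at (Suc R) = [e]"
    using stack_at_end by blast
  show npR: "\<not> opens_block (\<kappa> R)"
    using stack_at_Suc(4)[of R] R_pos stack_at_inv(1)[of R] final by auto
  show npoR: "\<not> closes_block (\<kappa> R)"
    using last_not_closing first_position(1) by auto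
  have "tl (stack_at R) = []"
    using stack_at_Suc(2)[of R] R_pos npR npoR final by simp
  then have "last (stack_at R) = hd (stack_at R)"
    using stack_at_inv(1)[of R] R_pos by (cases "stack_at R") auto
  then show "label R = 0" "\<iota> R = k'"
    using stack_at_Suc(1)[of R] stack_at_inv(4,5)[of R] R_pos npR by auto
qed

lemma final_component: "stack_at (Suc R) = [e] \<Longrightarrow> fst (snd e) = k'"
  using stack_at_Suc(2)[of R] R_pos last_position by auto

lemma block_ge: "p \<in> block X \<Longrightarrow> X \<le> p"
  using label_le by (auto simp: block_def)

lemma finite_block: "finite (block X)"
  unfolding block_def by (rule finite_subset[of _ "{..R}"]) auto

lemma in_block_label: "1 \<le> j \<Longrightarrow> j \<le> R \<Longrightarrow> j \<in> block (label j)"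
  by (simp add: block_def)

text \<open>The bottom block is touched \<open>card\<close> times, an opened block \<open>card - 1\<close> times after
  its opening position.\<close>

lemma even_card_block:
  assumes "1 \<le> j" "j \<le> R"
  shows "even (card (block (label j)))"
proof (cases "label j = 0")
  case True
  have "card (block 0) = later_count 1 0"
    by (simp add: block_def later_count_def)
  also have "\<dots> = touch_count \<kappa> 1 R 0"
    using touch_count_eq_later_count[of 1 R 0] stack_at_1 by simp
  finally show ?thesis
    using True even_bottom_touches by simp
next
  case False
  define X where "X = label j"
  then have X: "1 \<le> X" "X \<le> R" "opens_block (\<kappa> X)" "label X = X"
    using label_cases[OF assms] False by auto
  have "block X = {p'. X \<le> p' \<and> p' \<le> R \<and> label p' = X}"
    using block_ge[of _ X] X(1) unfolding block_def by auto
  then have "card (block X) = later_count X X"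
    by (simp add: later_count_def)
  also have "\<dots> = 1 + touch_count \<kappa> (Suc X) (R - X) 0"
    using touch_count_eq_later_count[of "Suc X" "R - X" 0] later_count_Suc[of X X]
      stack_at_Suc(4)[of X] X
    by simp
  finally show ?thesis
    using odd_touches_after_opening[OF X(1-3)] X_def by simp
qed

definition run_partition :: "nat set set" where
  "run_partition = (\<lambda>j. block (label j)) ` {1..R}"

lemma block_of_run_partition:
  assumes "1 \<le> j" "j \<le> R"
  shows "block_of run_partition j = block (label j)"
  unfolding block_of_def
proof (rule the_equality)
  show "block (label j) \<in> run_partition \<and> j \<in> block (label j)"
    using assms in_block_label by (auto simp: run_partition_def)
next
  fix B assume "B \<in> run_partition \<and> j \<in> B"
  then show "B = block (label j)"
    by (auto simp: run_partition_def block_def)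
qed

lemma partition_on_run_partition: "partition_on {1..R} run_partition"
proof (rule partition_onI)
  show "\<Union> run_partition = {1..R}"
    using in_block_label by (auto simp: run_partition_def block_def)
  show "{} \<notin> run_partition"
  proof
    assume "{} \<in> run_partition"
    then obtain j where "1 \<le> j" "j \<le> R" "block (label j) = {}"
      by (auto simp: run_partition_def)
    then show False
      using in_block_label by blast
  qed
  fix B B' assume "B \<in> run_partition" "B' \<in> run_partition" "B \<noteq> B'"
  then show "disjnt B B'"
    by (auto simp: run_partition_def block_def disjnt_def)
qed

lemma NC_run_partition: "NC R run_partition"
  unfolding NC_def
proof (intro conjI partition_on_run_partition ballI impI notI)
  fix B B' assume B: "B \<in> run_partition" "B' \<in> run_partition" "B \<noteq> B'"
    and "\<exists>a b c d. a < b \<and> b < c \<and> c < d \<and> a \<in> B \<and> c \<in> B \<and> b \<in> B' \<and> d \<in> B'"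
  then obtain a b c d where abcd: "a < b" "b < c" "c < d" "a \<in> B" "c \<in> B" "b \<in> B'" "d \<in> B'"
    by blast
  obtain X Y where "B = block X" "B' = block Y"
    using B by (auto simp: run_partition_def)
  then have "label a = label c" "label b = label d" "label a \<noteq> label b" "1 \<le> a" "d \<le> R"
    using abcd B(3) by (auto simp: block_def)
  then show False
    using labels_noncrossing[of a b c d] abcd(1-3) by simp
qed

lemma NC_irr_run_partition: "NC_irr R run_partition"
  unfolding NC_irr_def
proof (intro conjI NC_run_partition bexI)
  show "block (label 1) \<in> run_partition"
    using R_pos by (auto simp: run_partition_def)
  show "1 \<in> block (label 1)" "R \<in> block (label 1)"
    using R_pos first_position last_position by (simp_all add: block_def)
qed

lemma block_ok_run_partition:
  assumes "B \<in> run_partition"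
  shows "block_ok \<iota> \<epsilon> B"
proof -
  obtain j where j: "1 \<le> j" "j \<le> R" and B: "B = block (label j)"
    using assms by (auto simp: run_partition_def)
  show ?thesis
  proof (rule block_ok_if_consecutive)
    show "finite B" "B \<noteq> {}" "even (card B)"
      using B finite_block in_block_label[OF j] even_card_block[OF j] by auto
    fix p p' assume "p \<in> B" "p' \<in> B" "p < p'" and between: "{p<..<p'} \<inter> B = {}"
    then have "\<iota> p = \<iota> p' \<and> kind_exp (\<kappa> p) \<noteq> kind_exp (\<kappa> p')"
      by (intro consecutive_block_members) (auto simp: B block_def)
    then show "\<iota> p = \<iota> p' \<and> \<epsilon> p \<noteq> \<epsilon> p'"
      using \<open>p \<in> B\<close> \<open>p' \<in> B\<close> kind_exp_eq by (auto simp: B block_def)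
  qed
qed

lemma Min_block_opening:
  assumes "1 \<le> j" "j \<le> R" "opens_block (\<kappa> j)"
  shows "Min (block_of run_partition j) = j"
proof -
  have "label j = j"
    using assms by (simp add: label_def)
  then show ?thesis
    unfolding block_of_run_partition[OF assms(1,2)]
    by (intro Min_eqI) (use finite_block block_ge in_block_label[OF assms(1,2)] in auto)
qed

lemma Min_block_not_opening:
  assumes "2 \<le> j" "j \<le> R" "\<not> opens_block (\<kappa> j)"
  shows "Min (block_of run_partition j) \<noteq> j"
proof -
  have j: "1 \<le> j" "j \<le> R"
    using assms by auto
  have "\<exists>m \<in> block (label j). m < j"
  proof (cases "label j = 0")
    case True
    then show ?thesis
      using first_position(2) R_pos assms(1) by (auto simp: block_def)
  next
    case False
    then have "label j \<in> block (label j)"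
      using label_cases[OF j] by (auto simp: block_def)
    then show ?thesis
      using label_hd(3)[OF j assms(3)] by auto
  qed
  then have "Min (block (label j)) < j"
    using Min_le[OF finite_block] by (meson le_less_trans)
  then show ?thesis
    unfolding block_of_run_partition[OF j] by simp
qed

lemma Max_block_closing:
  assumes "1 \<le> j" "j \<le> R" "closes_block (\<kappa> j)"
  shows "Max (block_of run_partition j) = j"
proof -
  have "p \<le> j" if "p \<in> block (label j)" for p
    using not_closing_before_member[of j p] that assms by (force simp: block_def)
  then show ?thesis
    unfolding block_of_run_partition[OF assms(1,2)]
    by (intro Max_eqI) (use finite_block in_block_label[OF assms(1,2)] in auto)
qed

lemma Max_block_not_closing:
  assumes "1 \<le> j" "j < R" "\<not> closes_block (\<kappa> j)"
  shows "Max (block_of run_partition j) \<noteq> j"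
proof -
  have "\<exists>m \<in> block (label j). j < m"
  proof (cases "label j = 0")
    case True
    then have "R \<in> block (label j)"
      using last_position(3) R_pos by (simp add: block_def)
    then show ?thesis
      using assms(2) by blast
  next
    case False
    have "label j \<in> live_labels (Suc j)"
      using entry_after_non_closing[of j] assms by force
    moreover have "live_labels (Suc R) = {0}"
      using stack_at_end stack_at_inv(4)[of "Suc R"] by auto
    ultimately obtain p' where "Suc j \<le> p'" "p' < Suc R" "label p' = label j"
      using removed_label_closes_between[of "label j" "Suc j" "Suc R"] False assms by auto
    then have "p' \<in> block (label j)" "j < p'"
      by (auto simp: block_def)
    then show ?thesis by blast
  qed
  then have "j < Max (block (label j))"
    using Max_ge[OF finite_block] by (meson less_le_trans)
  moreover have "j \<le> R"
    using assms(2) by simp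
  ultimately show ?thesis
    using block_of_run_partition[OF assms(1)] by simp
qed

lemma op_of_kind_eq_phi:
  assumes "1 \<le> j" "j \<le> R"
  shows "op_of_kind \<sigma> (\<kappa> j) (\<iota> j) = phi \<sigma> R \<iota> \<epsilon> run_partition j"
proof -
  have exp: "kind_exp (\<kappa> j) = \<epsilon> j"
    using kind_exp_eq assms by simp
  consider "j = 1 \<or> j = R" | "2 \<le> j" "j < R"
    using assms by linarith
  then show ?thesis
  proof cases
    case 1
    then have "\<not> opens_block (\<kappa> j) \<and> \<not> closes_block (\<kappa> j)"
      using first_not_opening first_position(1) last_position(1,2) by auto
    then show ?thesis
      using 1 exp by (cases "\<kappa> j") (auto simp: phi_def Mpow_def)
  next
    case 2
    then show ?thesis
      using Min_block_opening[OF assms] Min_block_not_opening[OF 2(1) assms(2)]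
        Max_block_closing[OF assms] Max_block_not_closing[OF assms(1) 2(2)] exp
      by (cases "\<kappa> j") (auto simp: phi_def Mpow_def)
  qed
qed

end

theorem lemma4p3:
  fixes \<sigma> :: "nat \<Rightarrow> real measure" and N R k k' :: nat
    and \<epsilon> :: "nat \<Rightarrow> bool" and \<iota> :: "nat \<Rightarrow> nat" and \<psi> :: "nat \<Rightarrow> fvec \<Rightarrow> fvec"
  assumes meas: "\<And>q. q \<in> {1..N} \<Longrightarrow> sets (\<sigma> q) = sets borel"
    and fin: "\<And>q. q \<in> {1..N} \<Longrightarrow> finite_measure (\<sigma> q)"
    and cpt: "\<And>q. q \<in> {1..N} \<Longrightarrow> \<exists>C. compact C \<and> emeasure (\<sigma> q) (- C) = 0"
    and sym: "\<And>q A. q \<in> {1..N} \<Longrightarrow> A \<in> sets borel \<Longrightarrow>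
                 emeasure (\<sigma> q) (uminus ` A) = emeasure (\<sigma> q) A"
    and R: "1 \<le> R"
    and iota: "\<And>j. j \<in> {1..R} \<Longrightarrow> \<iota> j \<in> {1..N}"
    and a: "\<psi> 1 \<in> (if \<epsilon> 1 then {opM (\<iota> 1), opAstar (\<iota> 1)}
                   else {opMstar (\<iota> 1), opDstar (\<iota> 1)})"
    and b: "\<psi> R \<in> (if \<epsilon> R then {opM (\<iota> R), opD \<sigma> (\<iota> R)}
                   else {opMstar (\<iota> R), opA \<sigma> (\<iota> R)})"
    and c: "\<And>j. 2 \<le> j \<Longrightarrow> j \<le> R - 1 \<Longrightarrow>
              \<psi> j \<in> {Mpow (\<iota> j) (\<epsilon> j), Astarpow \<sigma> (\<iota> j) (\<epsilon> j), Dpow \<sigma> (\<iota> j) (\<epsilon> j)}"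
    and k: "k \<in> {1..N}" and k': "k' \<in> {1..N}"
    and nz: "fock_inner \<sigma> N (apply_word \<psi> R (eta k)) (eta k') \<noteq> 0"
  shows "k = k' \<and> k' = \<iota> 1 \<and> \<iota> 1 = \<iota> R \<and>
         (\<exists>\<pi>. NC R \<pi> \<and> NC_irr R \<pi> \<and> (\<forall>B\<in>\<pi>. block_ok \<iota> \<epsilon> B) \<and>
              (\<forall>j\<in>{1..R}. \<psi> j = phi \<sigma> R \<iota> \<epsilon> \<pi> j))"
proof -
  obtain \<kappa> where
      K: "\<And>j. 1 \<le> j \<Longrightarrow> j \<le> R \<Longrightarrow> \<psi> j = op_of_kind \<sigma> (\<kappa> j) (\<iota> j) \<and> kind_exp (\<kappa> j) = \<epsilon> j"
    and first: "\<not> opens_block (\<kappa> 1)" and last: "R = 1 \<or> \<not> closes_block (\<kappa> R)"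
    using admissible_word_op_kinds[OF R a b c] by blast
  obtain b0 where weight: "run_weight \<sigma> \<kappa> \<iota> k 1 R [(0, k', b0)] \<noteq> 0"
    and even: "even (touch_count \<kappa> 1 R 0)"
    using fock_inner_nonzero_imp_run_weight[OF meas[OF k'] fin[OF k'] sym[OF k'] _ nz] K by blast
  have odd: "odd (touch_count \<kappa> (Suc p) (R - p) 0)"
    if p: "1 \<le> p" "p \<le> R" "opens_block (\<kappa> p)" for p
  proof -
    have q: "\<iota> p \<in> {1..N}"
      using iota p by simp
    show ?thesis
      by (rule run_weight_nonzero_imp_odd_touch_count[OF weight p meas[OF q] sym[OF q]])
  qed
  obtain e where run: "run \<kappa> \<iota> 1 R [(0, k', b0)] = Some [e]" and "fst (snd e) = k"
    using run_weight_nonzero_imp_run[OF weight] by blast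
  interpret accepting_run \<kappa> \<iota> R k' b0 \<epsilon>
    by unfold_locales (use R run first last even odd K in blast)+
  have "k = k'"
    using final_component[of e] run \<open>fst (snd e) = k\<close> by (simp add: stack_at_def)
  moreover have "k' = \<iota> 1" "\<iota> 1 = \<iota> R"
    using first_position(3) last_position(4) by simp_all
  moreover have "\<forall>j\<in>{1..R}. \<psi> j = phi \<sigma> R \<iota> \<epsilon> run_partition j"
    using K op_of_kind_eq_phi by simp
  ultimately show ?thesis
    using NC_run_partition NC_irr_run_partition block_ok_run_partition
    by (intro conjI exI[of _ run_partition]; blast)
qed

end
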